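(* For every $I\in\{0,1\}^{n\times m}$ there exists $\mathcal{F}\subseteq\mathcal{B}_{\mathcal{E}}(I)$ with $|\mathcal{F}|=\mathrm{rank}_\mathrm{B}(I)$ such that $A_{\mathcal{F}}\circ B_{\mathcal{F}}=I$.
   Context: $(A\circ B)_{ij}=\max_l\min(A_{il},B_{lj})$ is the Boolean product; $\mathrm{rank}_\mathrm{B}(I)$ is the least $k$ with $I=A\circ B$ for some $A\in\{0,1\}^{n\times k}$, $B\in\{0,1\}^{k\times m}$. With $X=\{1,\dots,n\}$, $Y=\{1,\dots,m\}$ and for $C\subseteq X$, $D\subseteq Y$: $C^{\uparrow}=\{j\mid \forall i\in C: I_{ij}=1\}$, $D^{\downarrow}=\{i\mid \forall j\in D: I_{ij}=1\}$; $\mathcal{B}(I)=\{\langle C,D\rangle\mid C^\uparrow=D, D^\downarrow=C\}$ ordered by inclusion of first components; $\gamma(i)=\langle\{i\}^{\uparrow\downarrow},\{i\}^\uparrow\rangle$, $\mu(j)=\langle\{j\}^\downarrow,\{j\}^{\downarrow\uparrow}\rangle$, $\mathcal{I}_{ij}=\{c\in\mathcal{B}(I)\mid\gamma(i)\leq c\leq\mu(j)\}$. $\mathcal{E}(I)_{ij}=1$ iff $\mathcal{I}_{ij}$ is non-empty and minimal w.r.t. $\subseteq$ among the non-empty sets $\mathcal{I}_{i'j'}$, and $\mathcal{B}_{\mathcal{E}}(I)=\bigcup\{\mathcal{I}_{ij}\mid \mathcal{E}(I)_{ij}=1\}$. For $\mathcal{F}=\{\langle C_1,D_1\rangle,\dots,\langle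 C_p,D_p\rangle\}\subseteq\mathcal{B}(I)$, $(A_{\mathcal{F}})_{il}=1$ iff $i\in C_l$ and $(B_{\mathcal{F}})_{lj}=1$ iff $j\in D_l$. *)

theory Defs
  imports Main
begin

(* Boolean matrices: an n x m Boolean matrix is a function nat => nat => bool,
   only entries with row index in {1..n} and column index in {1..m} matter. *)

definition bool_prod :: "(nat \<Rightarrow> nat \<Rightarrow> bool) \<Rightarrow> (nat \<Rightarrow> nat \<Rightarrow> bool) \<Rightarrow> nat \<Rightarrow> nat \<Rightarrow> nat \<Rightarrow> bool" where
  "bool_prod A B k i j \<longleftrightarrow> (\<exists>l\<in>{1..k}. A i l \<and> B l j)"

definition is_bool_decomp :: "nat \<Rightarrow> nat \<Rightarrow> (nat \<Rightarrow> nat \<Rightarrow> bool) \<Rightarrow> nat \<Rightarrow> (nat \<Rightarrow> nat \<Rightarrow> bool) \<Rightarrow> (nat \<Rightarrow> nat \<Rightarrow> bool) \<Rightarrow> bool" where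
  "is_bool_decomp n m I k A B \<longleftrightarrow> (\<forall>i\<in>{1..n}. \<forall>j\<in>{1..m}. I i j = bool_prod A B k i j)"

definition rank_B :: "nat \<Rightarrow> nat \<Rightarrow> (nat \<Rightarrow> nat \<Rightarrow> bool) \<Rightarrow> nat" where
  "rank_B n m I = (LEAST k. \<exists>A B. is_bool_decomp n m I k A B)"

definition up :: "nat \<Rightarrow> (nat \<Rightarrow> nat \<Rightarrow> bool) \<Rightarrow> nat set \<Rightarrow> nat set" where
  "up m I C = {j\<in>{1..m}. \<forall>i\<in>C. I i j}"

definition down :: "nat \<Rightarrow> (nat \<Rightarrow> nat \<Rightarrow> bool) \<Rightarrow> nat set \<Rightarrow> nat set" where
  "down n I D = {i\<in>{1..n}. \<forall>j\<in>D. I i j}"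

definition concepts :: "nat \<Rightarrow> nat \<Rightarrow> (nat \<Rightarrow> nat \<Rightarrow> bool) \<Rightarrow> (nat set \<times> nat set) set" where
  "concepts n m I = {(C, D). C \<subseteq> {1..n} \<and> D \<subseteq> {1..m} \<and> up m I C = D \<and> down n I D = C}"

definition gamma :: "nat \<Rightarrow> nat \<Rightarrow> (nat \<Rightarrow> nat \<Rightarrow> bool) \<Rightarrow> nat \<Rightarrow> nat set \<times> nat set" where
  "gamma n m I i = (down n I (up m I {i}), up m I {i})"

definition mu :: "nat \<Rightarrow> nat \<Rightarrow> (nat \<Rightarrow> nat \<Rightarrow> bool) \<Rightarrow> nat \<Rightarrow> nat set \<times> nat set" where
  "mu n m I j = (down n I {j}, up m I (down n I {j}))"

definition concept_le :: "nat set \<times> nat set \<Rightarrow> nat set \<times> nat set \<Rightarrow> bool" where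
  "concept_le c d \<longleftrightarrow> fst c \<subseteq> fst d"

definition interval :: "nat \<Rightarrow> nat \<Rightarrow> (nat \<Rightarrow> nat \<Rightarrow> bool) \<Rightarrow> nat \<Rightarrow> nat \<Rightarrow> (nat set \<times> nat set) set" where
  "interval n m I i j = {c \<in> concepts n m I. concept_le (gamma n m I i) c \<and> concept_le c (mu n m I j)}"

definition ess :: "nat \<Rightarrow> nat \<Rightarrow> (nat \<Rightarrow> nat \<Rightarrow> bool) \<Rightarrow> nat \<Rightarrow> nat \<Rightarrow> bool" where
  "ess n m I i j \<longleftrightarrow> i \<in> {1..n} \<and> j \<in> {1..m} \<and> interval n m I i j \<noteq> {} \<and>
     (\<forall>i'\<in>{1..n}. \<forall>j'\<in>{1..m}. interval n m I i' j' \<noteq> {} \<and> interval n m I i' j' \<subseteq> interval n m I i j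
        \<longrightarrow> interval n m I i' j' = interval n m I i j)"

definition ess_concepts :: "nat \<Rightarrow> nat \<Rightarrow> (nat \<Rightarrow> nat \<Rightarrow> bool) \<Rightarrow> (nat set \<times> nat set) set" where
  "ess_concepts n m I = \<Union>{interval n m I i j | i j. ess n m I i j}"

(* A_F and B_F for an enumeration fs = [<C_1,D_1>, ..., <C_p,D_p>] of F (1-based columns/rows) *)
definition A_F :: "(nat set \<times> nat set) list \<Rightarrow> nat \<Rightarrow> nat \<Rightarrow> bool" where
  "A_F fs i l \<longleftrightarrow> i \<in> fst (fs ! (l - 1))"

definition B_F :: "(nat set \<times> nat set) list \<Rightarrow> nat \<Rightarrow> nat \<Rightarrow> bool" where
  "B_F fs l j \<longleftrightarrow> j \<in> snd (fs ! (l - 1))"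

end

theory Submission
  imports Defs
begin

text \<open>Take a factorisation \<open>I = A \<circ> B\<close> with \<open>rank\<^sub>B(I)\<close> factors and replace each factor \<open>l\<close>
  by the concept generated by the support of column \<open>l\<close> of \<open>A\<close>. If \<open>A\<^sub>i\<^sub>l = B\<^sub>l\<^sub>j = 1\<close>, this concept
  lies in \<open>\<I>\<^sub>i\<^sub>j\<close>. Every 1 of \<open>I\<close> lies in some nonempty interval, which contains a minimal,
  i.e. essential, interval, and that interval in turn contains one of the factor concepts. So the
  factor concepts belonging to \<open>\<B>\<^sub>\<E>(I)\<close> already cover \<open>I\<close>; there are at most
  \<open>rank\<^sub>B(I)\<close> of them, and by minimality of the rank not fewer.\<close>

lemma mem_concepts:
  "c \<in> concepts n m I \<longleftrightarrow>
     fst c \<subseteq> {1..n} \<and> snd c \<subseteq> {1..m} \<and> up m I (fst c) = snd c \<and> down n I (snd c) = fst c"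
  by (cases c) (simp add: concepts_def)

lemma concept_rectangle: "c \<in> concepts n m I \<Longrightarrow> i \<in> fst c \<Longrightarrow> j \<in> snd c \<Longrightarrow> I i j"
  unfolding mem_concepts down_def by blast

lemma closure_subset_extent_iff:
  assumes "c \<in> concepts n m I" "X \<subseteq> {1..n}"
  shows "down n I (up m I X) \<subseteq> fst c \<longleftrightarrow> X \<subseteq> fst c"
proof
  have "X \<subseteq> down n I (up m I X)"
    using assms(2) by (auto simp: up_def down_def)
  then show "down n I (up m I X) \<subseteq> fst c \<Longrightarrow> X \<subseteq> fst c" by blast
next
  assume "X \<subseteq> fst c"
  then have "snd c \<subseteq> up m I X"
    using assms(1) concept_rectangle[OF assms(1)] by (auto simp: mem_concepts up_def)
  then have "down n I (up m I X) \<subseteq> down n I (snd c)"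
    by (auto simp: down_def)
  then show "down n I (up m I X) \<subseteq> fst c"
    using assms(1) by (simp add: mem_concepts)
qed

lemma mem_interval_iff:
  assumes "i \<in> {1..n}" "j \<in> {1..m}"
  shows "c \<in> interval n m I i j \<longleftrightarrow> c \<in> concepts n m I \<and> i \<in> fst c \<and> j \<in> snd c"
  using assms closure_subset_extent_iff[of c n m I "{i}"]
  by (auto simp: interval_def concept_le_def gamma_def mu_def mem_concepts up_def down_def)

lemma interval_nonempty_iff:
  assumes "i \<in> {1..n}" "j \<in> {1..m}"
  shows "interval n m I i j \<noteq> {} \<longleftrightarrow> I i j"
proof
  assume "interval n m I i j \<noteq> {}"
  then obtain c where "c \<in> concepts n m I" "i \<in> fst c" "j \<in> snd c"
    using assms by (auto simp: mem_interval_iff)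
  then show "I i j" by (rule concept_rectangle)
next
  assume "I i j"
  then have "mu n m I j \<in> interval n m I i j"
    using assms by (auto simp: mem_interval_iff mu_def mem_concepts up_def down_def)
  then show "interval n m I i j \<noteq> {}" by blast
qed

lemma ess_interval_below:
  assumes "i \<in> {1..n}" "j \<in> {1..m}" "I i j"
  shows "\<exists>i' j'. ess n m I i' j' \<and> interval n m I i' j' \<subseteq> interval n m I i j"
proof -
  define nonempty_intervals where "nonempty_intervals =
    (\<lambda>(i, j). interval n m I i j) ` {(i, j) \<in> {1..n} \<times> {1..m}. I i j}"
  have "finite nonempty_intervals"
    unfolding nonempty_intervals_def
    by (rule finite_imageI, rule finite_subset[of _ "{1..n} \<times> {1..m}"]) auto
  moreover have "interval n m I i j \<in> nonempty_intervals"
    using assms by (auto simp: nonempty_intervals_def)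
  ultimately obtain i' j' where i'j': "i' \<in> {1..n}" "j' \<in> {1..m}" "I i' j'"
    and below: "interval n m I i' j' \<subseteq> interval n m I i j"
    and minimal: "\<forall>M \<in> nonempty_intervals. M \<subseteq> interval n m I i' j' \<longrightarrow> interval n m I i' j' = M"
    by (auto dest!: finite_has_minimal2 simp: nonempty_intervals_def)
  have "ess n m I i' j'"
    unfolding ess_def
  proof (intro conjI ballI impI)
    fix a b
    assume "a \<in> {1..n}" "b \<in> {1..m}"
      and "interval n m I a b \<noteq> {} \<and> interval n m I a b \<subseteq> interval n m I i' j'"
    moreover from this have "interval n m I a b \<in> nonempty_intervals"
      by (auto simp: nonempty_intervals_def interval_nonempty_iff)
    ultimately show "interval n m I a b = interval n m I i' j'"
      using minimal by blast
  qed (use i'j' interval_nonempty_iff in auto)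
  with below show ?thesis by blast
qed

lemma ess_imp_incidence: "ess n m I i j \<Longrightarrow> i \<in> {1..n} \<and> j \<in> {1..m} \<and> I i j"
  unfolding ess_def using interval_nonempty_iff by blast

definition closure_concept :: "nat \<Rightarrow> nat \<Rightarrow> (nat \<Rightarrow> nat \<Rightarrow> bool) \<Rightarrow> nat set \<Rightarrow> nat set \<times> nat set" where
  "closure_concept n m I X = (down n I (up m I X), up m I X)"

lemma closure_concept_in_concepts:
  "X \<subseteq> {1..n} \<Longrightarrow> closure_concept n m I X \<in> concepts n m I"
  by (auto simp: closure_concept_def mem_concepts up_def down_def)

lemma factor_concept_in_interval:
  assumes "is_bool_decomp n m I k A B" "l \<in> {1..k}"
    and "i \<in> {1..n}" "j \<in> {1..m}" "A i l" "B l j"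
  shows "closure_concept n m I {x \<in> {1..n}. A x l} \<in> interval n m I i j"
proof -
  let ?X = "{x \<in> {1..n}. A x l}"
  have "\<forall>x \<in> ?X. I x j"
    using assms by (auto simp: is_bool_decomp_def bool_prod_def)
  then have "j \<in> up m I ?X"
    using assms(4) by (auto simp: up_def)
  moreover have "i \<in> down n I (up m I ?X)"
    using assms(3,5) by (auto simp: up_def down_def)
  moreover have "closure_concept n m I ?X \<in> concepts n m I"
    by (rule closure_concept_in_concepts) auto
  ultimately show ?thesis
    using mem_interval_iff[OF assms(3,4)] by (simp add: closure_concept_def)
qed

lemma ess_cover_from_decomp:
  assumes "is_bool_decomp n m I k A B"
  obtains F where "F \<subseteq> ess_concepts n m I" "finite F" "card F \<le> k"
    "\<forall>i \<in> {1..n}. \<forall>j \<in> {1..m}. I i j \<longleftrightarrow> (\<exists>c \<in> F. i \<in> fst c \<and> j \<in> snd c)"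
proof -
  define factor where "factor l = closure_concept n m I {x \<in> {1..n}. A x l}" for l
  define F where "F = factor ` {1..k} \<inter> ess_concepts n m I"
  have "F \<subseteq> ess_concepts n m I" "finite F"
    unfolding F_def by auto
  moreover have "card F \<le> k"
    using card_mono[of "factor ` {1..k}" F] card_image_le[of "{1..k}" factor]
    by (auto simp: F_def)
  moreover have "I i j \<longleftrightarrow> (\<exists>c \<in> F. i \<in> fst c \<and> j \<in> snd c)"
    if ij: "i \<in> {1..n}" "j \<in> {1..m}" for i j
  proof
    assume "\<exists>c \<in> F. i \<in> fst c \<and> j \<in> snd c"
    then obtain l where "l \<in> {1..k}" "i \<in> fst (factor l)" "j \<in> snd (factor l)"
      by (auto simp: F_def)
    moreover have "factor l \<in> concepts n m I"
      unfolding factor_def by (rule closure_concept_in_concepts) auto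
    ultimately show "I i j"
      using concept_rectangle by blast
  next
    assume "I i j"
    then obtain i' j' where ess: "ess n m I i' j'"
      and below: "interval n m I i' j' \<subseteq> interval n m I i j"
      using ess_interval_below ij by blast
    then have i'j': "i' \<in> {1..n}" "j' \<in> {1..m}" "I i' j'"
      using ess_imp_incidence by blast+
    then obtain l where "l \<in> {1..k}" "A i' l" "B l j'"
      using assms i'j' unfolding is_bool_decomp_def bool_prod_def by blast
    then have "factor l \<in> interval n m I i' j'"
      unfolding factor_def using assms i'j' by (intro factor_concept_in_interval)
    then have "factor l \<in> F" "factor l \<in> interval n m I i j"
      using ess below \<open>l \<in> {1..k}\<close> by (auto simp: F_def ess_concepts_def)
    then show "\<exists>c \<in> F. i \<in> fst c \<and> j \<in> snd c"
      using ij by (auto simp: mem_interval_iff)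
  qed
  ultimately show ?thesis
    by (intro that) blast+
qed

lemma bex_one_based_nth_iff: "(\<exists>l \<in> {1..length xs}. P (xs ! (l - 1))) \<longleftrightarrow> (\<exists>x \<in> set xs. P x)"
proof -
  have "(\<exists>l \<in> {1..length xs}. P (xs ! (l - 1))) \<longleftrightarrow> (\<exists>l \<in> {..<length xs}. P (xs ! l))"
    unfolding image_Suc_lessThan[symmetric] by simp
  also have "\<dots> \<longleftrightarrow> (\<exists>x \<in> set xs. P x)"
    by (metis in_set_conv_nth lessThan_iff)
  finally show ?thesis .
qed

lemma bool_prod_A_F_B_F_iff:
  "bool_prod (A_F fs) (B_F fs) (length fs) i j \<longleftrightarrow> (\<exists>c \<in> set fs. i \<in> fst c \<and> j \<in> snd c)"
  unfolding bool_prod_def A_F_def B_F_def by (rule bex_one_based_nth_iff)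

lemma rank_B_le: "is_bool_decomp n m I k A B \<Longrightarrow> rank_B n m I \<le> k"
  unfolding rank_B_def by (rule Least_le) blast

lemma rank_B_decomp: "\<exists>A B. is_bool_decomp n m I (rank_B n m I) A B"
proof -
  have "is_bool_decomp n m I n (\<lambda>i l. i = l) I"
    by (auto simp: is_bool_decomp_def bool_prod_def)
  then have "\<exists>k A B. is_bool_decomp n m I k A B" by blast
  then show ?thesis
    unfolding rank_B_def by (rule LeastI_ex)
qed

theorem theorem5:
  fixes n m :: nat and I :: "nat \<Rightarrow> nat \<Rightarrow> bool"
  shows "\<exists>fs. distinct fs \<and> set fs \<subseteq> ess_concepts n m I \<and> length fs = rank_B n m I \<and>
           (\<forall>i\<in>{1..n}. \<forall>j\<in>{1..m}. bool_prod (A_F fs) (B_F fs) (length fs) i j = I i j)"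
proof -
  obtain A B where "is_bool_decomp n m I (rank_B n m I) A B"
    using rank_B_decomp by blast
  then obtain F where F: "F \<subseteq> ess_concepts n m I" "finite F" "card F \<le> rank_B n m I"
    and cover: "\<forall>i \<in> {1..n}. \<forall>j \<in> {1..m}. I i j \<longleftrightarrow> (\<exists>c \<in> F. i \<in> fst c \<and> j \<in> snd c)"
    by (rule ess_cover_from_decomp)
  obtain fs where fs: "set fs = F" "distinct fs"
    using finite_distinct_list[OF \<open>finite F\<close>] by blast
  have decomp: "\<forall>i \<in> {1..n}. \<forall>j \<in> {1..m}. bool_prod (A_F fs) (B_F fs) (length fs) i j = I i j"
    using cover fs(1) bool_prod_A_F_B_F_iff by blast
  then have "rank_B n m I \<le> length fs"
    by (intro rank_B_le[of _ _ _ _ "A_F fs" "B_F fs"]) (simp add: is_bool_decomp_def)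
  moreover have "length fs = card F"
    using distinct_card[OF fs(2)] fs(1) by simp
  ultimately show ?thesis
    using F fs decomp by auto
qed

end
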